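(* Let $G$ and $H$ be impartial games that are both $\mathcal{P}$-positions. Then the split sum $G \circ H$ is a $\mathcal{P}$-position.
   Context: All games are finite (short) impartial games under normal play (a player with no legal move loses). A game is identified with its set of options, written $\{g_1,\dots,g_k\}$; $\mathbf{E}$ denotes the game with no options. Two games are identical, $G\equiv H$, if they have the same set of options, recursively. A $\mathcal{P}$-position is a game whose options are all $\mathcal{N}$-positions (in particular $\mathbf{E}$ is a $\mathcal{P}$-position); an $\mathcal{N}$-position is a game having at least one option that is a $\mathcal{P}$-position. The split sum is defined recursively by: $G\circ H \equiv \mathbf{E}$ if $G\equiv \mathbf{E}$; $G\circ H\equiv G$ if $H\equiv\mathbf{E}$ (and $G\not\equiv\mathbf{E}$); otherwise $G\circ H \equiv \{G\circ h,\ g\circ H\}$ where $g$ ranges over the options of $G$ and $h$ over the options of $H$. *)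

theory Defs
  imports Main "HOL-Library.FSet"
begin

text \<open>A finite impartial game is identified with its finite set of options,
  recursively; equality of this datatype is exactly recursive identity.\<close>
datatype game = Game (opts: "game fset")

definition E :: game where "E = Game {||}"

lemma size_opt_less: "g |\<in>| opts G \<Longrightarrow> size g < size G"
proof (cases G)
  case (Game S)
  assume "g |\<in>| opts G"
  then have g: "g \<in> fset S" using Game by simp
  have "size g < Suc (size g)" by simp
  also have "\<dots> \<le> (\<Sum>x\<in>fset S. Suc (size x))"
    by (rule member_le_sum[OF g]) auto
  finally show ?thesis using Game by simp
qed

function isP :: "game \<Rightarrow> bool" and isN :: "game \<Rightarrow> bool" where
  "isP G = (\<forall>g\<in>fset (opts G). isN g)"
| "isN G = (\<exists>g\<in>fset (opts G). isP g)"
  by pat_completeness auto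
termination
  by (relation "measure (\<lambda>x. case x of Inl G \<Rightarrow> size G | Inr G \<Rightarrow> size G)")
     (auto dest: size_opt_less)

function ssum :: "game \<Rightarrow> game \<Rightarrow> game" (infixl "\<circ>\<^sub>s" 70) where
  "ssum G H =
     (if G = E then E
      else if H = E then G
      else Game ((\<lambda>h. ssum G h) |`| opts H |\<union>| (\<lambda>g. ssum g H) |`| opts G))"
  by pat_completeness auto
termination
  by (relation "measure (\<lambda>(G, H). size G + size H)") (auto dest: size_opt_less)

declare isP.simps[simp del] isN.simps[simp del] ssum.simps[simp del]

end

theory Submission
  imports Defs
begin

text \<open>For \<open>G \<noteq> E\<close> and at least one of \<open>G\<close>, \<open>H\<close> a \<open>\<P>\<close>-position,
  \<open>G \<circ> H\<close> is a \<open>\<P>\<close>-position exactly when both are. This stronger claim goes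
  through by induction on \<open>|G| + |H|\<close>: if, say, \<open>H\<close> is an \<open>\<N>\<close>-position, a
  \<open>\<P>\<close>-option \<open>h\<close> of \<open>H\<close> yields the \<open>\<P>\<close>-option \<open>G \<circ> h\<close> (which is \<open>G\<close> itself
  when \<open>h = E\<close>); if both are \<open>\<P>\<close>-positions, every option of \<open>G \<circ> H\<close> pairs a
  \<open>\<P>\<close>-position with an \<open>\<N>\<close>-position and is an \<open>\<N>\<close>-position by induction.\<close>

lemma isN_iff_not_isP: "isN G \<longleftrightarrow> \<not> isP G"
proof (induction "size G" arbitrary: G rule: less_induct)
  case less
  then have "\<And>g. g |\<in>| opts G \<Longrightarrow> isN g \<longleftrightarrow> \<not> isP g"
    using size_opt_less by blast
  then show ?case by (auto simp: isP.simps[of G] isN.simps[of G])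
qed

lemma isP_iff: "isP G \<longleftrightarrow> (\<forall>g. g |\<in>| opts G \<longrightarrow> \<not> isP g)"
  by (auto simp: isP.simps[of G] isN_iff_not_isP)

lemma isP_E: "isP E"
  by (simp add: E_def isP.simps)

lemma ssum_E_left: "E \<circ>\<^sub>s H = E"
  by (simp add: ssum.simps)

lemma ssum_E_right: "G \<circ>\<^sub>s E = G"
  by (simp add: ssum.simps)

lemma isP_ssum_iff:
  assumes "G \<noteq> E" and "H \<noteq> E"
  shows "isP (G \<circ>\<^sub>s H) \<longleftrightarrow>
    (\<forall>h. h |\<in>| opts H \<longrightarrow> \<not> isP (G \<circ>\<^sub>s h)) \<and> (\<forall>g. g |\<in>| opts G \<longrightarrow> \<not> isP (g \<circ>\<^sub>s H))"
proof -
  have "opts (G \<circ>\<^sub>s H) = (\<lambda>h. G \<circ>\<^sub>s h) |`| opts H |\<union>| (\<lambda>g. g \<circ>\<^sub>s H) |`| opts G"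
    using assms by (simp add: ssum.simps[of G H])
  then show ?thesis
    by (auto simp: isP_iff[of "G \<circ>\<^sub>s H"])
qed

lemma isP_ssum_iff_both_isP:
  assumes "G \<noteq> E" and "isP G \<or> isP H"
  shows "isP (G \<circ>\<^sub>s H) \<longleftrightarrow> isP G \<and> isP H"
  using assms
proof (induction "size G + size H" arbitrary: G H rule: less_induct)
  case less
  have IH_right: "isP (G \<circ>\<^sub>s h) \<longleftrightarrow> isP G \<and> isP h"
    if "h |\<in>| opts H" "isP G \<or> isP h" for h
    using less that size_opt_less[OF that(1)] by simp
  have IH_left: "isP (g \<circ>\<^sub>s H) \<longleftrightarrow> isP g \<and> isP H"
    if "g |\<in>| opts G" "g \<noteq> E" "isP g \<or> isP H" for g
    using less that size_opt_less[OF that(1)] by simp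
  show ?case
  proof (cases "H = E")
    case True
    then show ?thesis by (simp add: ssum_E_right isP_E)
  next
    case H_ne: False
    consider "isP G" "isP H" | "isP G" "\<not> isP H" | "\<not> isP G" "isP H"
      using less.prems(2) by blast
    then show ?thesis
    proof cases
      case 1
      have "\<not> isP (G \<circ>\<^sub>s h)" if "h |\<in>| opts H" for h
        using IH_right[OF that] 1 isP_iff[of H] that by blast
      moreover have "\<not> isP (g \<circ>\<^sub>s H)" if "g |\<in>| opts G" for g
        using IH_left[OF that] 1 isP_iff[of G] that isP_E by metis
      ultimately show ?thesis
        using 1 isP_ssum_iff[OF less.prems(1) H_ne] by simp
    next
      case 2
      then obtain h where h: "h |\<in>| opts H" "isP h"
        using isP_iff[of H] by blast
      have "isP (G \<circ>\<^sub>s h)"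
        using IH_right[OF h(1)] 2 h(2) ssum_E_right by (cases "h = E") auto
      then show ?thesis
        using 2 h(1) isP_ssum_iff[OF less.prems(1) H_ne] by blast
    next
      case 3
      then obtain g where g: "g |\<in>| opts G" "isP g"
        using isP_iff[of G] by blast
      have "isP (g \<circ>\<^sub>s H)"
        using IH_left[OF g(1)] 3 g(2) ssum_E_left isP_E by (cases "g = E") auto
      then show ?thesis
        using 3 g(1) isP_ssum_iff[OF less.prems(1) H_ne] by blast
    qed
  qed
qed

theorem theorem2p2:
  fixes G H :: game
  assumes "isP G" and "isP H"
  shows "isP (G \<circ>\<^sub>s H)"
proof (cases "G = E")
  case True
  then show ?thesis by (simp add: ssum_E_left isP_E)
next
  case False
  then show ?thesis using isP_ssum_iff_both_isP assms by blast
qed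

end
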